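(* Let $\lambda>0$. For every irrational $\alpha$ and every $\theta\in\mathbb{T}_0$, neither $\lambda$ nor $-\lambda$ is an eigenvalue of $\mathcal{H}_\theta$.
   Context: $\mathbb{T}=\mathbb{R}/\mathbb{Z}$, $\mathbb{T}_0=\{\theta\in\mathbb{T}:\cos 2\pi(n\alpha+\theta)\neq 0\ \forall n\in\mathbb{Z}\}$. For $\theta\in\mathbb{T}$, $n\in\mathbb{Z}$ put $v(\theta,n)=\cos2\pi((n-1)\alpha+\theta)$ if $n$ is odd and $v(\theta,n)=\cos 2\pi(n\alpha+\theta)$ if $n$ is even; $c(\theta,n)=\lambda$ if $n$ is odd and $c(\theta,n)=\cos2\pi(n\alpha+\theta)$ if $n$ is even. For $\theta\in\mathbb{T}_0$, $\mathcal{H}_\theta$ acts on $\ell^2(\mathbb{Z})$ by $(\mathcal{H}_\theta u)(n)=c(\theta,n)u(n+1)+c(\theta,n-1)u(n-1)+v(\theta,n)u(n)$. *)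

theory Defs
  imports "HOL-Analysis.Analysis"
begin

text \<open>The circle T = R/Z is represented by real numbers theta; all quantities
  below are 1-periodic in theta.\<close>

definition T0 :: "real \<Rightarrow> real set" where
  "T0 \<alpha> = {\<theta>. \<forall>n::int. cos (2 * pi * (real_of_int n * \<alpha> + \<theta>)) \<noteq> 0}"

definition vpot :: "real \<Rightarrow> real \<Rightarrow> int \<Rightarrow> real" where
  "vpot \<alpha> \<theta> n = (if odd n then cos (2 * pi * (real_of_int (n - 1) * \<alpha> + \<theta>))
                     else cos (2 * pi * (real_of_int n * \<alpha> + \<theta>)))"

definition coef :: "real \<Rightarrow> real \<Rightarrow> real \<Rightarrow> int \<Rightarrow> real" where
  "coef lam \<alpha> \<theta> n = (if odd n then lam else cos (2 * pi * (real_of_int n * \<alpha> + \<theta>)))"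

definition Hop :: "real \<Rightarrow> real \<Rightarrow> real \<Rightarrow> (int \<Rightarrow> complex) \<Rightarrow> int \<Rightarrow> complex" where
  "Hop lam \<alpha> \<theta> u n = complex_of_real (coef lam \<alpha> \<theta> n) * u (n + 1)
                    + complex_of_real (coef lam \<alpha> \<theta> (n - 1)) * u (n - 1)
                    + complex_of_real (vpot \<alpha> \<theta> n) * u n"

definition l2 :: "(int \<Rightarrow> complex) set" where
  "l2 = {u. (\<lambda>n. (norm (u n))\<^sup>2) summable_on UNIV}"

definition is_eigenvalue :: "real \<Rightarrow> real \<Rightarrow> real \<Rightarrow> complex \<Rightarrow> bool" where
  "is_eigenvalue lam \<alpha> \<theta> E \<longleftrightarrow>
     (\<exists>u \<in> l2. u \<noteq> (\<lambda>_. 0) \<and> (\<forall>n. Hop lam \<alpha> \<theta> u n = E * u n))"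

end

theory Submission
  imports Defs
begin

text \<open>Write \<open>E = \<sigma> \<lambda>\<close> with \<open>\<sigma> = \<plusminus>1\<close> and \<open>c\<^sub>k = cos 2\<pi>(2k\<alpha> + \<theta>)\<close>. The eigenvalue
  equations at the sites \<open>2k\<close> and \<open>2k+1\<close> both contain the term \<open>c\<^sub>k (u(2k+1) + u(2k))\<close>;
  equating them shows that \<open>t\<^sub>k = \<sigma> u(2k) - u(2k-1)\<close> satisfies \<open>t\<^sub>k\<^sub>+\<^sub>1 = -\<sigma> t\<^sub>k\<close>.
  So \<open>|t\<^sub>k|\<close> is constant, and square summability of \<open>u\<close> forces \<open>t = 0\<close>. Then \<open>c\<^sub>k \<noteq> 0\<close>
  gives \<open>u(2k+1) = -u(2k)\<close> and \<open>u(2k+2) = -\<sigma> u(2k)\<close>, so \<open>|u(2k)|\<close> is constant, hence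
  zero, and \<open>u = 0\<close>.\<close>

lemma l2_tendsto_zero_along_inj:
  assumes "u \<in> l2" "inj g"
  shows "(\<lambda>k::nat. u (g k)) \<longlonglongrightarrow> 0"
proof -
  have "(\<lambda>n. (norm (u n))\<^sup>2) summable_on UNIV"
    using assms(1) by (simp add: l2_def)
  then have "(\<lambda>n. (norm (u n))\<^sup>2) summable_on range g"
    by (rule summable_on_subset_banach) simp
  then have "(\<lambda>n. (norm (u n))\<^sup>2) \<circ> g summable_on UNIV"
    using summable_on_reindex[of g UNIV] assms(2) by auto
  then have "summable (\<lambda>k. (norm (u (g k)))\<^sup>2)"
    by (subst (asm) summable_on_UNIV_nonneg_real_iff) (auto simp: o_def)
  then have "(\<lambda>k. sqrt ((norm (u (g k)))\<^sup>2)) \<longlonglongrightarrow> sqrt 0"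
    by (intro tendsto_real_sqrt summable_LIMSEQ_zero)
  then show ?thesis
    by (simp add: tendsto_norm_zero_iff)
qed

lemma zero_if_shift_preserves_norm_and_tendsto_zero:
  fixes f :: "int \<Rightarrow> 'a::real_normed_vector"
  assumes shift: "\<And>k. norm (f (k + 1)) = norm (f k)"
    and lim: "(\<lambda>k::nat. f (int k)) \<longlonglongrightarrow> 0"
  shows "f k = 0"
proof -
  have const: "norm (f k) = norm (f 0)" for k
  proof (induction k rule: int_induct[where k = 0])
    case base
    then show ?case by simp
  next
    case (step1 i)
    then show ?case using shift[of i] by simp
  next
    case (step2 i)
    then show ?case using shift[of "i - 1"] by simp
  qed
  have "(\<lambda>k::nat. norm (f (int k))) \<longlonglongrightarrow> 0"
    using lim by (rule tendsto_norm_zero)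
  then have "(\<lambda>k::nat. norm (f 0)) \<longlonglongrightarrow> 0"
    by (simp only: const[where k = "int n" for n])
  then have "norm (f 0) = 0"
    by (simp add: LIMSEQ_const_iff)
  then show ?thesis
    using const[of k] by simp
qed

text \<open>The cell \<open>{2k, 2k+1}\<close> carries the hopping and both potential values \<open>c\<^sub>k\<close>;
  neighbouring cells are coupled by \<open>\<lambda>\<close>.\<close>

definition cell_coef :: "real \<Rightarrow> real \<Rightarrow> int \<Rightarrow> real" where
  "cell_coef \<alpha> \<theta> k = cos (2 * pi * (real_of_int (2 * k) * \<alpha> + \<theta>))"

lemma cell_coef_nonzero: "\<theta> \<in> T0 \<alpha> \<Longrightarrow> cell_coef \<alpha> \<theta> k \<noteq> 0"
  unfolding T0_def cell_coef_def by blast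

lemma Hop_even:
  fixes u :: "int \<Rightarrow> complex"
  shows "Hop lam \<alpha> \<theta> u (2 * k) =
     cell_coef \<alpha> \<theta> k * (u (2 * k + 1) + u (2 * k)) + complex_of_real lam * u (2 * k - 1)"
proof -
  have "odd (2 * k - 1)" by simp
  then show ?thesis
    by (simp add: Hop_def coef_def vpot_def cell_coef_def algebra_simps)
qed

lemma Hop_odd:
  fixes u :: "int \<Rightarrow> complex"
  shows "Hop lam \<alpha> \<theta> u (2 * k + 1) =
     cell_coef \<alpha> \<theta> k * (u (2 * k + 1) + u (2 * k)) + complex_of_real lam * u (2 * k + 2)"
proof -
  have "2 * k + 1 + 1 = 2 * k + 2" "2 * k + 1 - 1 = 2 * k" by simp_all
  then show ?thesis
    unfolding Hop_def coef_def vpot_def cell_coef_def by (simp add: algebra_simps)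
qed

lemma eigenvector_cell_balance:
  assumes "\<And>n. Hop lam \<alpha> \<theta> u n = E * u n"
  shows "E * u (2 * k + 1) - lam * u (2 * k + 2) = E * u (2 * k) - lam * u (2 * k - 1)"
proof -
  have "E * u (2 * k) = cell_coef \<alpha> \<theta> k * (u (2 * k + 1) + u (2 * k)) + lam * u (2 * k - 1)"
    using assms[of "2 * k"] by (simp add: Hop_even)
  moreover have "E * u (2 * k + 1) =
      cell_coef \<alpha> \<theta> k * (u (2 * k + 1) + u (2 * k)) + lam * u (2 * k + 2)"
    using assms[of "2 * k + 1"] by (simp add: Hop_odd)
  ultimately show ?thesis
    by (simp add: algebra_simps)
qed

lemma l2_eigenvector_sign_lam_across_cells:
  assumes "u \<in> l2" "lam \<noteq> 0" "\<sigma> * \<sigma> = 1"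
    and eigen: "\<And>n. Hop lam \<alpha> \<theta> u n = \<sigma> * lam * u n"
  shows "u (2 * k - 1) = \<sigma> * u (2 * k)"
proof -
  define t where "t k = \<sigma> * u (2 * k) - u (2 * k - 1)" for k
  have t_alt: "\<sigma> * u (2 * k + 1) - u (2 * k + 2) = t k" for k
  proof -
    have "lam * (\<sigma> * u (2 * k + 1) - u (2 * k + 2)) = lam * t k"
      using eigenvector_cell_balance[OF eigen, of k] unfolding t_def by (simp add: algebra_simps)
    then show ?thesis
      using assms(2) by simp
  qed
  have "t (k + 1) = - \<sigma> * t k" for k
  proof -
    have "t (k + 1) = \<sigma> * u (2 * k + 2) - u (2 * k + 1)"
      unfolding t_def by (simp add: algebra_simps)
    also have "\<dots> = - \<sigma> * (\<sigma> * u (2 * k + 1) - u (2 * k + 2))"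
      using assms(3) by (simp add: algebra_simps)
    finally show ?thesis
      using t_alt by simp
  qed
  then have "norm (t (k + 1)) = norm (t k)" for k
    using assms(3) by (auto simp: norm_mult square_eq_1_iff)
  moreover have "(\<lambda>k::nat. t (int k)) \<longlonglongrightarrow> 0"
    using l2_tendsto_zero_along_inj[OF assms(1), of "\<lambda>k. 2 * int k"]
      l2_tendsto_zero_along_inj[OF assms(1), of "\<lambda>k. 2 * int k - 1"]
    unfolding t_def by (auto intro!: tendsto_eq_intros simp: inj_def)
  ultimately have "t k = 0"
    by (rule zero_if_shift_preserves_norm_and_tendsto_zero)
  then show ?thesis
    unfolding t_def by simp
qed

lemma not_is_eigenvalue_sign_times_lam:
  fixes \<sigma> :: complex
  assumes "lam \<noteq> 0" "\<theta> \<in> T0 \<alpha>" "\<sigma> * \<sigma> = 1"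
  shows "\<not> is_eigenvalue lam \<alpha> \<theta> (\<sigma> * complex_of_real lam)"
proof
  assume "is_eigenvalue lam \<alpha> \<theta> (\<sigma> * complex_of_real lam)"
  then obtain u where u: "u \<in> l2" "u \<noteq> (\<lambda>_. 0)"
    and eigen: "\<And>n. Hop lam \<alpha> \<theta> u n = \<sigma> * lam * u n"
    unfolding is_eigenvalue_def by blast
  note link = l2_eigenvector_sign_lam_across_cells[OF u(1) assms(1,3) eigen]
  have odd_site: "u (2 * k + 1) = - u (2 * k)" for k
  proof -
    have "cell_coef \<alpha> \<theta> k * (u (2 * k + 1) + u (2 * k)) = 0"
      using eigen[of "2 * k"] link[of k] by (simp add: Hop_even)
    then show ?thesis
      using cell_coef_nonzero[OF assms(2)] by (simp add: add_eq_0_iff)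
  qed
  have "u (2 * (k + 1)) = - \<sigma> * u (2 * k)" for k
  proof -
    have "u (2 * k + 1) = \<sigma> * u (2 * (k + 1))"
      using link[of "k + 1"] by (simp add: algebra_simps)
    then have "\<sigma> * u (2 * k + 1) = u (2 * (k + 1))"
      using assms(3) by (simp add: mult.assoc[symmetric])
    then show ?thesis
      using odd_site[of k] by simp
  qed
  then have "norm (u (2 * (k + 1))) = norm (u (2 * k))" for k
    using assms(3) by (auto simp: norm_mult square_eq_1_iff)
  moreover have "(\<lambda>k::nat. u (2 * int k)) \<longlonglongrightarrow> 0"
    by (rule l2_tendsto_zero_along_inj[OF u(1)]) (simp add: inj_def)
  ultimately have even_site: "u (2 * k) = 0" for k
    by (rule zero_if_shift_preserves_norm_and_tendsto_zero[where f = "\<lambda>k. u (2 * k)"])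
  have "u n = 0" for n
  proof (cases "even n")
    case True
    then show ?thesis by (auto simp: even_site)
  next
    case False
    then obtain k where "n = 2 * k + 1" by (rule oddE)
    then show ?thesis by (simp add: odd_site even_site)
  qed
  with u(2) show False by auto
qed

theorem lemma3p4:
  fixes lam \<alpha> \<theta> :: real
  assumes "lam > 0"
    and "\<alpha> \<notin> \<rat>"
    and "\<theta> \<in> T0 \<alpha>"
  shows "\<not> is_eigenvalue lam \<alpha> \<theta> (complex_of_real lam)
       \<and> \<not> is_eigenvalue lam \<alpha> \<theta> (complex_of_real (- lam))"
  using not_is_eigenvalue_sign_times_lam[OF _ assms(3), of lam 1]
    not_is_eigenvalue_sign_times_lam[OF _ assms(3), of lam "-1"] assms(1)
  by simp

end
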